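(* For any myopic equilibrium $\mathbf{s}$ of a $k$-round Funding Game with bundle sizes $m^1,\dots,m^k$ and valuation profile $\mathbf{v}$ (with $\Delta^t>0$ for $t=1,\dots,k$), $$sw(OPT^{\mathbf{v}}) \;\le\; sw(\mathbf{s}) + \Delta^{k+1}\cdot\sum_{t=1}^k\left(m^t - \frac{sw(\mathbf{s}^t)}{\Delta^t}\right).$$
   Context: Players $1,\dots,n$ have valuation functions $v_i:\{0,\dots,m\}\to\mathbb{R}_{\ge0}$ with $v_i(0)=0$, nondecreasing, with diminishing marginal returns $v_i(x)-v_i(x-1)\ge v_i(x+1)-v_i(x)$. A (single-round) Funding Game with $M$ items and such valuations $w_i$: each player submits a request $(x_i,\tilde v_i)$ with $x_i\in\{0,\dots,M\}$ and $0\le \tilde v_i\le w_i(x_i)$; the Highest Ratio Greedy mechanism considers requests in descending order of $\tilde v_i/x_i$ (ties in favor of lower index) and grants each in turn $\min(x_i,\text{items still available})$ items; payoff is $w_i$ of the number of items received; a Nash equilibrium is a request profile where no player can increase its payoff by changing its own valid request. A $k$-round Funding Game with bundle sizes $m^1,\dots,m^k$ (positive integers, $\sum_t m^t=m$) consists of rounds $t=1,\dots,k$; in round $t$ a single-round Funding Game $G^t$ is played with $m^t$ items and marginal valuations $v_i^t(x)=v_i(x+\alpha_i^{t-1})-v_i(\alpha_i^{t-1})$, where $X_i^t$ is the number of items player $i$ receives in round $t$ and $\alpha_i^t=\sum_{j\le t}X_i^j$, $\alpha_i^0=0$. $\mathbf{s}^t$ is the request profile in round $t$ and $\mathbf{s}=(\mathbf{s}^1,\dots,\mathbf{s}^k)$.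 $\mathbf{s}$ is a myopic equilibrium if each $\mathbf{s}^t$ is a Nash equilibrium of $G^t$. $sw(\mathbf{s}^t)=\sum_i v_i^t(X_i^t)$, $sw(\mathbf{s})=\sum_i v_i(\alpha_i^k)$, and $\Delta^t=\max_i v_i^t(1)$ for $t=1,\dots,k+1$ (with $v_i^{k+1}(x)=v_i(x+\alpha_i^k)-v_i(\alpha_i^k)$). $sw(OPT^{\mathbf{v}})$ is the maximum of $\sum_i v_i(X_i)$ over allocations with $\sum_i X_i\le m$. *)

theory Defs
  imports Complex_Main "HOL-Library.Product_Lexorder"
begin

(* Players are 0..<n (paper: 1..n; order of indices is preserved).
   A valuation profile is v :: nat => nat => real, v i x = value of player i for x items. *)

definition valuation :: "(nat \<Rightarrow> real) \<Rightarrow> bool" where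
  "valuation f \<longleftrightarrow> f 0 = 0 \<and> mono f \<and>
     (\<forall>x. f (x + 2) - f (x + 1) \<le> f (x + 1) - f x)"

(* ratio of a request (xr, vr): vr / xr  (note: vr / 0 = 0 in Isabelle;
   a request with xr = 0 receives 0 items regardless of its position) *)
definition req_ratio :: "(nat \<Rightarrow> nat) \<Rightarrow> (nat \<Rightarrow> real) \<Rightarrow> nat \<Rightarrow> real" where
  "req_ratio xr vr i = vr i / real (xr i)"

definition hrg_order :: "nat \<Rightarrow> (nat \<Rightarrow> nat) \<Rightarrow> (nat \<Rightarrow> real) \<Rightarrow> nat list" where
  "hrg_order n xr vr = sort_key (\<lambda>i. (- req_ratio xr vr i, i)) [0..<n]"

fun grant :: "nat \<Rightarrow> (nat \<Rightarrow> nat) \<Rightarrow> nat list \<Rightarrow> nat \<Rightarrow> nat" where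
  "grant rem xr [] = (\<lambda>_. 0)"
| "grant rem xr (i # is) = (grant (rem - min (xr i) rem) xr is)(i := min (xr i) rem)"

definition hrg_alloc :: "nat \<Rightarrow> nat \<Rightarrow> (nat \<Rightarrow> nat) \<Rightarrow> (nat \<Rightarrow> real) \<Rightarrow> nat \<Rightarrow> nat" where
  "hrg_alloc n M xr vr = grant M xr (hrg_order n xr vr)"

definition valid_request :: "nat \<Rightarrow> (nat \<Rightarrow> real) \<Rightarrow> nat \<Rightarrow> real \<Rightarrow> bool" where
  "valid_request M wi xi vi \<longleftrightarrow> xi \<le> M \<and> 0 \<le> vi \<and> vi \<le> wi xi"

definition nash_eq :: "nat \<Rightarrow> nat \<Rightarrow> (nat \<Rightarrow> nat \<Rightarrow> real) \<Rightarrow> (nat \<Rightarrow> nat) \<Rightarrow> (nat \<Rightarrow> real) \<Rightarrow> bool" where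
  "nash_eq n M w xr vr \<longleftrightarrow>
     (\<forall>i<n. valid_request M (w i) (xr i) (vr i)) \<and>
     (\<forall>i<n. \<forall>x' v'. valid_request M (w i) x' v' \<longrightarrow>
        w i (hrg_alloc n M (xr(i := x')) (vr(i := v')) i) \<le> w i (hrg_alloc n M xr vr i))"

(* k-round game: bundle sizes mb t (t = 1..k), requests xs t i, vs t i in round t.
   alpha t i = items received by player i in rounds 1..t *)
fun alpha :: "nat \<Rightarrow> (nat \<Rightarrow> nat) \<Rightarrow> (nat \<Rightarrow> nat \<Rightarrow> nat) \<Rightarrow> (nat \<Rightarrow> nat \<Rightarrow> real) \<Rightarrow> nat \<Rightarrow> nat \<Rightarrow> nat" where
  "alpha n mb xs vs 0 = (\<lambda>i. 0)"
| "alpha n mb xs vs (Suc t) =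
     (\<lambda>i. alpha n mb xs vs t i + hrg_alloc n (mb (Suc t)) (xs (Suc t)) (vs (Suc t)) i)"

definition marg_val :: "nat \<Rightarrow> (nat \<Rightarrow> nat) \<Rightarrow> (nat \<Rightarrow> nat \<Rightarrow> nat) \<Rightarrow> (nat \<Rightarrow> nat \<Rightarrow> real)
     \<Rightarrow> (nat \<Rightarrow> nat \<Rightarrow> real) \<Rightarrow> nat \<Rightarrow> nat \<Rightarrow> nat \<Rightarrow> real" where
  "marg_val n mb xs vs v t i x =
     v i (x + alpha n mb xs vs (t - 1) i) - v i (alpha n mb xs vs (t - 1) i)"

definition myopic_eq :: "nat \<Rightarrow> nat \<Rightarrow> (nat \<Rightarrow> nat) \<Rightarrow> (nat \<Rightarrow> nat \<Rightarrow> real)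
     \<Rightarrow> (nat \<Rightarrow> nat \<Rightarrow> nat) \<Rightarrow> (nat \<Rightarrow> nat \<Rightarrow> real) \<Rightarrow> bool" where
  "myopic_eq n k mb v xs vs \<longleftrightarrow>
     (\<forall>t\<in>{1..k}. nash_eq n (mb t) (marg_val n mb xs vs v t) (xs t) (vs t))"

definition sw_round :: "nat \<Rightarrow> (nat \<Rightarrow> nat) \<Rightarrow> (nat \<Rightarrow> nat \<Rightarrow> real)
     \<Rightarrow> (nat \<Rightarrow> nat \<Rightarrow> nat) \<Rightarrow> (nat \<Rightarrow> nat \<Rightarrow> real) \<Rightarrow> nat \<Rightarrow> real" where
  "sw_round n mb v xs vs t =
     (\<Sum>i<n. marg_val n mb xs vs v t i (hrg_alloc n (mb t) (xs t) (vs t) i))"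

definition sw_total :: "nat \<Rightarrow> (nat \<Rightarrow> nat) \<Rightarrow> (nat \<Rightarrow> nat \<Rightarrow> real)
     \<Rightarrow> (nat \<Rightarrow> nat \<Rightarrow> nat) \<Rightarrow> (nat \<Rightarrow> nat \<Rightarrow> real) \<Rightarrow> nat \<Rightarrow> real" where
  "sw_total n mb v xs vs k = (\<Sum>i<n. v i (alpha n mb xs vs k i))"

definition Delta :: "nat \<Rightarrow> (nat \<Rightarrow> nat) \<Rightarrow> (nat \<Rightarrow> nat \<Rightarrow> real)
     \<Rightarrow> (nat \<Rightarrow> nat \<Rightarrow> nat) \<Rightarrow> (nat \<Rightarrow> nat \<Rightarrow> real) \<Rightarrow> nat \<Rightarrow> real" where
  "Delta n mb v xs vs t = Max ((\<lambda>i. marg_val n mb xs vs v t i 1) ` {..<n})"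

definition sw_opt :: "nat \<Rightarrow> nat \<Rightarrow> (nat \<Rightarrow> nat \<Rightarrow> real) \<Rightarrow> real" where
  "sw_opt n m v = Max {(\<Sum>i<n. v i (X i)) | X. (\<Sum>i<n. X i) \<le> m}"

end

theory Submission
  imports Defs "HOL-Library.FuncSet"
begin

(* The bound holds for every allocation sequence produced by the k rounds.  The argument is a per-player accounting.
   Fix D = Delta^{k+1}.  For a concave valuation f with allocation history
   A 0 = 0 <= A 1 <= ... <= A k, and per-round thresholds Dl (t+1) bounding the
   marginal value f (A t + 1) - f (A t) and dominating D, we show by induction on t
     f y - D*y  <=  f (A t) - D * sum_{s<t} (f (A (s+1)) - f (A s)) / Dl (s+1)
   for all y <= A t, and for all y once t = k (beyond A k the marginal value is
   at most D).  In the game, Delta^{t+1} bounds every player's marginal value in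
   round t+1, and Delta^{k+1} <= Delta^{t+1} because the player attaining
   Delta^{k+1} had at most as many items earlier.  Summing over the players,
   bounding OPT by these affine per-player bounds with sum X_i <= m, and
   rewriting sum_t sw(s^t)/Delta^t as the sum of the normalized gains gives
   the theorem. *)

section \<open>Concave valuations\<close>

lemma valuation_mono: "valuation f \<Longrightarrow> a \<le> b \<Longrightarrow> f a \<le> f b"
  unfolding valuation_def by (auto dest: monoD)

lemma valuation_marginal_antimono:
  assumes "valuation f" and "a \<le> b"
  shows "f (b + 1) - f b \<le> f (a + 1) - f a"
  using assms(2)
proof (induction b)
  case 0 then show ?case by simp
next
  case (Suc b)
  have step: "f (b + 2) - f (b + 1) \<le> f (b + 1) - f b"
    using assms(1) unfolding valuation_def by blast
  show ?case
  proof (cases "a = Suc b")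
    case False
    then have "a \<le> b" using Suc.prems by simp
    then show ?thesis using Suc.IH step by (simp add: numeral_2_eq_2)
  qed simp
qed

lemma valuation_increment_le:
  assumes "valuation f"
  shows "f (a + p) - f a \<le> real p * (f (a + 1) - f a)"
proof (induction p)
  case 0 then show ?case by simp
next
  case (Suc p)
  have "f (a + p + 1) - f (a + p) \<le> f (a + 1) - f a"
    using valuation_marginal_antimono[OF assms, of a "a + p"] by simp
  then show ?case using Suc.IH by (simp add: algebra_simps)
qed

lemma valuation_tail_bound:
  assumes "valuation f" and "f (a + 1) - f a \<le> D" and "a \<le> y"
  shows "f y - D * real y \<le> f a - D * real a"
proof -
  obtain p where y: "y = a + p" using assms(3) le_Suc_ex by blast
  have "f y - f a \<le> real p * (f (a + 1) - f a)" using valuation_increment_le[OF assms(1)] y by simp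
  also have "\<dots> \<le> real p * D" using assms(2) by (intro mult_left_mono) auto
  finally show ?thesis using y by (simp add: algebra_simps)
qed

section \<open>Per-player accounting\<close>

definition normalized_gains :: "(nat \<Rightarrow> real) \<Rightarrow> (nat \<Rightarrow> nat) \<Rightarrow> (nat \<Rightarrow> real) \<Rightarrow> nat \<Rightarrow> real" where
  "normalized_gains f A Dl t = (\<Sum>s<t. (f (A (Suc s)) - f (A s)) / Dl (Suc s))"

lemma discounted_gain_bound:
  fixes w d p Dt D :: real
  assumes "0 \<le> D" "D \<le> Dt" "0 < Dt" "w \<le> p * Dt" "w \<le> d"
  shows "w - D * p \<le> d - D * d / Dt"
proof -
  have ratio: "0 \<le> D / Dt" "D / Dt \<le> 1" using assms by auto
  have "(D / Dt) * (d - p * Dt) \<le> d - w"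
  proof (cases "d - p * Dt \<ge> 0")
    case True
    then have "(D / Dt) * (d - p * Dt) \<le> d - p * Dt"
      using mult_right_mono[OF ratio(2) True] by simp
    then show ?thesis using assms by simp
  next
    case False
    then show ?thesis using ratio(1) mult_nonneg_nonpos[of "D / Dt" "d - p * Dt"] assms by linarith
  qed
  moreover have "D * d / Dt - D * p = (D / Dt) * (d - p * Dt)" using assms(3) by (simp add: field_simps)
  ultimately show ?thesis by linarith
qed

lemma accounting_step:
  assumes f: "valuation f" and "a \<le> a'"
    and marg: "f (a + 1) - f a \<le> Dt" and "0 < Dt" "0 \<le> D" "D \<le> Dt"
    and inv: "\<forall>y \<le> a. f y - D * real y \<le> F"
  shows "\<forall>y \<le> a'. f y - D * real y \<le> F + ((f a' - f a) - D * (f a' - f a) / Dt)"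
proof (intro allI impI)
  fix y assume "y \<le> a'"
  define d where "d = f a' - f a"
  have "D * d / Dt \<le> d"
    using \<open>0 < Dt\<close> \<open>D \<le> Dt\<close> \<open>0 \<le> D\<close> valuation_mono[OF f \<open>a \<le> a'\<close>]
    by (simp add: d_def divide_le_eq mult.commute mult_right_mono)
  show "f y - D * real y \<le> F + (d - D * d / Dt)" unfolding d_def[symmetric]
  proof (cases "y \<le> a")
    case True then show ?thesis using inv \<open>D * d / Dt \<le> d\<close> by force
  next
    case False
    then obtain p where y: "y = a + p" using le_Suc_ex nat_le_linear by metis
    have "f y - f a \<le> real p * Dt"
      using valuation_increment_le[OF f, of a p] marg y mult_left_mono[OF marg, of "real p"] by simp
    moreover have "f y - f a \<le> d" using valuation_mono[OF f \<open>y \<le> a'\<close>] by (simp add: d_def)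
    ultimately have "(f y - f a) - D * real p \<le> d - D * d / Dt"
      using discounted_gain_bound \<open>0 \<le> D\<close> \<open>D \<le> Dt\<close> \<open>0 < Dt\<close> by blast
    moreover have "f a - D * real a \<le> F" using inv by simp
    ultimately show ?thesis using y by (simp add: algebra_simps)
  qed
qed

lemma player_accounting:
  fixes f :: "nat \<Rightarrow> real" and A :: "nat \<Rightarrow> nat" and Dl :: "nat \<Rightarrow> real" and D :: real
  assumes f: "valuation f"
    and A0: "A 0 = 0" and A_mono: "\<And>t. A t \<le> A (Suc t)"
    and marg: "\<And>t. t < k \<Longrightarrow> f (A t + 1) - f (A t) \<le> Dl (Suc t)"
    and pos: "\<And>t. t < k \<Longrightarrow> 0 < Dl (Suc t)"
    and D_le: "\<And>t. t < k \<Longrightarrow> D \<le> Dl (Suc t)"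
    and "0 \<le> D"
    and marg_final: "f (A k + 1) - f (A k) \<le> D"
  shows "f y - D * real y \<le> f (A k) - D * normalized_gains f A Dl k"
proof -
  define F where "F t = f (A t) - D * normalized_gains f A Dl t" for t
  have inv: "t \<le> k \<Longrightarrow> \<forall>y \<le> A t. f y - D * real y \<le> F t" for t
  proof (induction t)
    case 0
    then show ?case using f A0 by (simp add: F_def normalized_gains_def valuation_def)
  next
    case (Suc t)
    then have "t < k" by simp
    have "F (Suc t) = F t + ((f (A (Suc t)) - f (A t)) - D * (f (A (Suc t)) - f (A t)) / Dl (Suc t))"
      unfolding F_def normalized_gains_def by (simp add: algebra_simps)
    then show ?case
      using accounting_step[OF f A_mono marg[OF \<open>t < k\<close>] pos[OF \<open>t < k\<close>] \<open>0 \<le> D\<close> D_le[OF \<open>t < k\<close>]]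
        Suc by simp
  qed
  show ?thesis
  proof (cases "y \<le> A k")
    case True then show ?thesis using inv[of k] by (simp add: F_def)
  next
    case False
    then have "f y - D * real y \<le> f (A k) - D * real (A k)"
      using valuation_tail_bound[OF f marg_final] by simp
    also have "\<dots> \<le> F k" using inv[of k] by simp
    finally show ?thesis by (simp add: F_def)
  qed
qed

section \<open>The optimum is bounded by affine per-player bounds\<close>

lemma sw_opt_le_affine:
  fixes v :: "nat \<Rightarrow> nat \<Rightarrow> real" and c :: "nat \<Rightarrow> real"
  assumes "0 \<le> D"
    and bound: "\<And>i y. i < n \<Longrightarrow> v i y \<le> c i + D * real y"
  shows "sw_opt n m v \<le> (\<Sum>i<n. c i) + D * real m"
proof -
  define S where "S = {(\<Sum>i<n. v i (X i)) | X. (\<Sum>i<n. X i) \<le> m}"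
  have "S \<subseteq> (\<lambda>X. \<Sum>i<n. v i (X i)) ` (PiE {..<n} (\<lambda>_. {..m}))"
  proof
    fix z assume "z \<in> S"
    then obtain X where X: "z = (\<Sum>i<n. v i (X i))" "(\<Sum>i<n. X i) \<le> m" unfolding S_def by auto
    have "restrict X {..<n} \<in> PiE {..<n} (\<lambda>_. {..m})"
    proof -
      have "X i \<le> m" if "i < n" for i using member_le_sum[of i "{..<n}" X] X(2) that by simp
      then show ?thesis by auto
    qed
    moreover have "z = (\<Sum>i<n. v i (restrict X {..<n} i))" using X(1) by simp
    ultimately show "z \<in> (\<lambda>X. \<Sum>i<n. v i (X i)) ` (PiE {..<n} (\<lambda>_. {..m}))" by blast
  qed
  then have "finite S" by (rule finite_subset) (intro finite_imageI finite_PiE; simp)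
  moreover have "(\<Sum>i<n. v i 0) \<in> S" unfolding S_def by (intro CollectI exI[of _ "\<lambda>_. 0"]) simp
  then have "S \<noteq> {}" by blast
  moreover have "z \<le> (\<Sum>i<n. c i) + D * real m" if "z \<in> S" for z
  proof -
    obtain X where X: "z = (\<Sum>i<n. v i (X i))" "(\<Sum>i<n. X i) \<le> m" using \<open>z \<in> S\<close> unfolding S_def by auto
    have "z \<le> (\<Sum>i<n. c i + D * real (X i))" unfolding X(1) by (intro sum_mono bound) simp
    also have "\<dots> = (\<Sum>i<n. c i) + D * real (\<Sum>i<n. X i)" by (simp add: sum.distrib sum_distrib_left)
    also have "\<dots> \<le> (\<Sum>i<n. c i) + D * real m"
      using mult_left_mono[of "real (\<Sum>i<n. X i)" "real m" D] X(2) \<open>0 \<le> D\<close>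
      by (simp del: of_nat_sum)
    finally show ?thesis .
  qed
  ultimately show ?thesis unfolding sw_opt_def S_def[symmetric] by (intro Max.boundedI) auto
qed

lemma alpha_mono: "t \<le> k \<Longrightarrow> alpha n mb xs vs t i \<le> alpha n mb xs vs k i"
  by (induction k) (auto simp: le_Suc_eq)

lemma Delta_Suc:
  "Delta n mb v xs vs (Suc t)
     = Max ((\<lambda>i. v i (alpha n mb xs vs t i + 1) - v i (alpha n mb xs vs t i)) ` {..<n})"
  unfolding Delta_def marg_val_def by (simp add: add.commute)

lemma marginal_le_Delta:
  "i < n \<Longrightarrow> v i (alpha n mb xs vs t i + 1) - v i (alpha n mb xs vs t i) \<le> Delta n mb v xs vs (Suc t)"
  unfolding Delta_Suc by (rule Max_ge) auto

lemma Delta_attained: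
  assumes "n \<ge> 1"
  obtains i where "i < n"
    "Delta n mb v xs vs (Suc t) = v i (alpha n mb xs vs t i + 1) - v i (alpha n mb xs vs t i)"
proof -
  let ?M = "(\<lambda>i. v i (alpha n mb xs vs t i + 1) - v i (alpha n mb xs vs t i)) ` {..<n}"
  have "{..<n} \<noteq> {}" using assms by (auto simp: lessThan_empty_iff)
  then have "Max ?M \<in> ?M" by (intro Max_in) auto
  then show ?thesis using that unfolding Delta_Suc by blast
qed

text \<open>The final threshold is nonnegative and below every earlier threshold: the player
  attaining it had at most as many items before, hence a larger marginal value.\<close>
lemma Delta_final_le:
  assumes "n \<ge> 1" and val: "\<forall>i<n. valuation (v i)" and "t \<le> k"
  shows "0 \<le> Delta n mb v xs vs (Suc k)" and "Delta n mb v xs vs (Suc k) \<le> Delta n mb v xs vs (Suc t)"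
proof -
  obtain i where i: "i < n"
    "Delta n mb v xs vs (Suc k) = v i (alpha n mb xs vs k i + 1) - v i (alpha n mb xs vs k i)"
    using Delta_attained[OF assms(1)] by blast
  show "0 \<le> Delta n mb v xs vs (Suc k)" using i val valuation_mono[of "v i"] by simp
  have "Delta n mb v xs vs (Suc k) \<le> v i (alpha n mb xs vs t i + 1) - v i (alpha n mb xs vs t i)"
    using i val valuation_marginal_antimono[of "v i"] alpha_mono[OF \<open>t \<le> k\<close>] by simp
  then show "Delta n mb v xs vs (Suc k) \<le> Delta n mb v xs vs (Suc t)"
    using marginal_le_Delta[OF i(1)] by (meson order_trans)
qed

lemma welfare_decomposition:
  assumes "(\<Sum>t=1..k. mb t) = m"
  shows "sw_total n mb v xs vs k + D * (\<Sum>t=1..k. real (mb t) - sw_round n mb v xs vs t / Delta n mb v xs vs t)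
    = (\<Sum>i<n. v i (alpha n mb xs vs k i)
         - D * normalized_gains (v i) (\<lambda>t. alpha n mb xs vs t i) (Delta n mb v xs vs) k) + D * real m"
proof -
  let ?G = "\<lambda>i. normalized_gains (v i) (\<lambda>t. alpha n mb xs vs t i) (Delta n mb v xs vs) k"
  have shift: "(\<Sum>t=1..k. h t) = (\<Sum>s<k. h (Suc s) :: real)" for h
    by (induction k) (auto simp: atLeastAtMostSuc_conv)
  have round: "sw_round n mb v xs vs (Suc s) / Delta n mb v xs vs (Suc s)
      = (\<Sum>i<n. (v i (alpha n mb xs vs (Suc s) i) - v i (alpha n mb xs vs s i)) / Delta n mb v xs vs (Suc s))" for s
    unfolding sw_round_def marg_val_def by (simp add: sum_divide_distrib add.commute)
  have "(\<Sum>t=1..k. sw_round n mb v xs vs t / Delta n mb v xs vs t) = (\<Sum>i<n. ?G i)"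
    unfolding shift round normalized_gains_def by (rule sum.swap)
  moreover have "(\<Sum>t=1..k. real (mb t)) = real m" using assms by (simp flip: of_nat_sum)
  ultimately show ?thesis
    by (simp add: sw_total_def sum_subtractf sum_distrib_left algebra_simps)
qed

theorem lemma2:
  fixes n k m :: nat and mb :: "nat \<Rightarrow> nat" and v :: "nat \<Rightarrow> nat \<Rightarrow> real"
    and xs :: "nat \<Rightarrow> nat \<Rightarrow> nat" and vs :: "nat \<Rightarrow> nat \<Rightarrow> real"
  assumes "n \<ge> 1"
    and "\<forall>i<n. valuation (v i)"
    and "\<forall>t\<in>{1..k}. mb t > 0"
    and "(\<Sum>t=1..k. mb t) = m"
    and "myopic_eq n k mb v xs vs"
    and "\<forall>t\<in>{1..k}. Delta n mb v xs vs t > 0"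
  shows "sw_opt n m v \<le> sw_total n mb v xs vs k
           + Delta n mb v xs vs (k + 1)
             * (\<Sum>t=1..k. real (mb t) - sw_round n mb v xs vs t / Delta n mb v xs vs t)"
proof -
  let ?a = "alpha n mb xs vs" and ?Dl = "Delta n mb v xs vs"
  let ?D = "?Dl (Suc k)"
  have D_nonneg: "0 \<le> ?D" using Delta_final_le[OF assms(1,2)] by blast
  have player: "v i y \<le> (v i (?a k i) - ?D * normalized_gains (v i) (\<lambda>t. ?a t i) ?Dl k) + ?D * real y"
    if "i < n" for i y
    using player_accounting[of "v i" "\<lambda>t. ?a t i" k ?Dl ?D y] that assms(2,6) D_nonneg
      marginal_le_Delta[OF that] Delta_final_le(2)[OF assms(1,2)] by fastforce
  have "sw_opt n m v
      \<le> (\<Sum>i<n. v i (?a k i) - ?D * normalized_gains (v i) (\<lambda>t. ?a t i) ?Dl k) + ?D * real m"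
    using sw_opt_le_affine[OF D_nonneg player] by simp
  then show ?thesis using welfare_decomposition[OF assms(4), of n v xs vs ?D] by simp
qed

end
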